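(* Let $a\geq 3$ and $m\geq 1$ be integers. There is a bijective correspondence between right $0$-pyramids of pieces of length $a$ and of size $m$, and positive $(am,m)$-strings.
   Context: A string is a finite sequence of $0$'s and $1$'s; an $(n,m)$-string is a string of length $n$ with exactly $m$ $1$'s. An $(am,m)$-string $x_1\dots x_{am}$ is positive if $t_s=\sum_{u=1}^s(a\,x_u-1)\geq 0$ for all $s=1,\dots,am$. A piece is an open interval $]s,s+a[$ with $s\in\mathbb Z$; two pieces are concurrent iff their intervals intersect. A heap is a finite configuration obtained by successively dropping pieces vertically towards the horizontal axis, each coming to rest on the axis or on top of the highest previously placed piece whose interval meets its own; configurations (not dropping orders) are counted. A pyramid is a heap with a unique bottom piece (exactly one piece on the axis); its size is its number of pieces. A right $0$-pyramid is a pyramid whose bottom piece covers $]0,a[$ and is a leftmost piece (no piece covers $]t,t+a[$ with $t<0$). *)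

theory Defs
  imports Complex_Main
begin

(* A placed piece is a pair (s, h): it covers the open interval ]s, s+a[ and sits at level h
   (level 0 = resting on the horizontal axis). *)

definition piece :: "nat \<Rightarrow> int \<Rightarrow> real set" where
  "piece a s = {x. real_of_int s < x \<and> x < real_of_int s + real a}"

definition concurrent :: "nat \<Rightarrow> int \<Rightarrow> int \<Rightarrow> bool" where
  "concurrent a s t \<longleftrightarrow> piece a s \<inter> piece a t \<noteq> {}"

definition drop_level :: "nat \<Rightarrow> (int \<times> nat) set \<Rightarrow> int \<Rightarrow> nat" where
  "drop_level a H s =
     (if \<exists>(t, h) \<in> H. concurrent a s t
      then Suc (Max {h. \<exists>t. (t, h) \<in> H \<and> concurrent a s t})
      else 0)"

inductive_set heaps :: "nat \<Rightarrow> (int \<times> nat) set set" for a :: nat where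
  empty: "{} \<in> heaps a"
| drop: "H \<in> heaps a \<Longrightarrow> insert (s, drop_level a H s) H \<in> heaps a"

definition pyramid :: "nat \<Rightarrow> (int \<times> nat) set \<Rightarrow> bool" where
  "pyramid a H \<longleftrightarrow> H \<in> heaps a \<and> card {p \<in> H. snd p = 0} = 1"

definition right0_pyramid :: "nat \<Rightarrow> (int \<times> nat) set \<Rightarrow> bool" where
  "right0_pyramid a H \<longleftrightarrow> pyramid a H \<and> (0, 0) \<in> H \<and> (\<forall>(t, h) \<in> H. 0 \<le> t)"

definition nm_string :: "nat \<Rightarrow> nat \<Rightarrow> nat list \<Rightarrow> bool" where
  "nm_string n m xs \<longleftrightarrow> set xs \<subseteq> {0, 1} \<and> length xs = n \<and> count_list xs 1 = m"

definition positive_string :: "nat \<Rightarrow> nat \<Rightarrow> nat list \<Rightarrow> bool" where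
  "positive_string a m xs \<longleftrightarrow> nm_string (a * m) m xs \<and>
     (\<forall>s \<in> {1..a * m}. (\<Sum>u = 1..s. int a * int (xs ! (u - 1)) - 1) \<ge> 0)"

end

theory Submission
  imports Defs
begin

(* Reading a positive string from left to right and recording the partial sum t just before each 1
   gives a sequence q_1 = 0, q_2, ..., q_m with 0 <= q_(i+1) <= q_i + a - 1, from which the string is
   recovered. Dropping pieces at the positions q_1, ..., q_m in this order builds a right 0-pyramid:
   every new piece meets a piece already on the heap, so only the first one touches the axis. The
   sequence is recovered from the pyramid because the last dropped piece is the leftmost of the
   maximal pieces (those with nothing concurrent above them). Conversely, removing the leftmost
   maximal piece of a right 0-pyramid with at least two pieces leaves a right 0-pyramid, and dropping
   that piece again puts it back in place, so by induction every right 0-pyramid arises. *)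

section \<open>Positive strings as sequences of heights\<close>

(* c is the partial sum t_s reached so far *)
fun positive_walk :: "nat \<Rightarrow> int \<Rightarrow> nat list \<Rightarrow> bool" where
  "positive_walk a c [] \<longleftrightarrow> c = 0"
| "positive_walk a c (x # w) \<longleftrightarrow> 0 \<le> c \<and> (x = 0 \<or> x = 1) \<and> positive_walk a (c + int a * int x - 1) w"

fun admissible :: "nat \<Rightarrow> int \<Rightarrow> int list \<Rightarrow> bool" where
  "admissible a c [] \<longleftrightarrow> True"
| "admissible a c (q # qs) \<longleftrightarrow> 0 \<le> q \<and> q \<le> c \<and> admissible a (q + int a - 1) qs"

fun heights_of_ones :: "nat \<Rightarrow> int \<Rightarrow> nat list \<Rightarrow> int list" where
  "heights_of_ones a c [] = []"
| "heights_of_ones a c (x # w) =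
     (if x = 1 then c # heights_of_ones a (c + int a - 1) w else heights_of_ones a (c - 1) w)"

fun string_of_heights :: "nat \<Rightarrow> int \<Rightarrow> int list \<Rightarrow> nat list" where
  "string_of_heights a c [] = replicate (nat c) 0"
| "string_of_heights a c (q # qs) =
     replicate (nat (c - q)) 0 @ 1 # string_of_heights a (q + int a - 1) qs"

lemma admissible_mono: "admissible a c qs \<Longrightarrow> c \<le> c' \<Longrightarrow> admissible a c' qs"
  by (cases qs) auto

lemma admissible_snoc:
  "admissible a c (qs @ [q]) \<longleftrightarrow>
     admissible a c qs \<and> 0 \<le> q \<and> q \<le> (if qs = [] then c else last qs + int a - 1)"
  by (induction qs arbitrary: c) auto

lemma admissible_nonneg: "admissible a c qs \<Longrightarrow> q \<in> set qs \<Longrightarrow> 0 \<le> q"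
  by (induction qs arbitrary: c) auto

lemma positive_walk_nonneg: "positive_walk a c w \<Longrightarrow> 0 \<le> c"
  by (cases w) auto

lemma positive_walk_replicate_zero:
  "int n \<le> c \<Longrightarrow> positive_walk a c (replicate n 0 @ w) \<longleftrightarrow> positive_walk a (c - int n) w"
  by (induction n arbitrary: c) (auto simp: algebra_simps)

lemma heights_of_ones_replicate_zero:
  "heights_of_ones a c (replicate n 0 @ w) = heights_of_ones a (c - int n) w"
  by (induction n arbitrary: c) (auto simp: algebra_simps)

lemma heights_of_ones_admissible:
  "positive_walk a c w \<Longrightarrow>
     admissible a c (heights_of_ones a c w) \<and> length (heights_of_ones a c w) = count_list w 1"
proof (induction w arbitrary: c)
  case (Cons x w)
  then show ?case
    by (cases "x = 1") (auto intro: admissible_mono[of a "c - 1" _ c])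
qed auto

lemma string_of_heights_correct:
  assumes "admissible a c qs" and "0 \<le> c" and "0 < a"
  shows "positive_walk a c (string_of_heights a c qs) \<and>
    heights_of_ones a c (string_of_heights a c qs) = qs \<and>
    count_list (string_of_heights a c qs) 1 = length qs"
  using assms
proof (induction qs arbitrary: c)
  case Nil
  then show ?case
    using positive_walk_replicate_zero[of "nat c" c a "[]"]
      heights_of_ones_replicate_zero[of a c "nat c" "[]"]
    by (simp add: count_list_0_iff)
next
  case (Cons q qs)
  then have "0 \<le> q" "q \<le> c" and IH:
    "positive_walk a (q + int a - 1) (string_of_heights a (q + int a - 1) qs) \<and>
     heights_of_ones a (q + int a - 1) (string_of_heights a (q + int a - 1) qs) = qs \<and>
     count_list (string_of_heights a (q + int a - 1) qs) 1 = length qs"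
    by auto
  then show ?case
    using positive_walk_replicate_zero[of "nat (c - q)" c a]
      heights_of_ones_replicate_zero[of a c "nat (c - q)"]
    by simp
qed

lemma string_of_heights_step_down:
  assumes "admissible a (c - 1) qs" and "1 \<le> c"
  shows "string_of_heights a c qs = 0 # string_of_heights a (c - 1) qs"
proof (cases qs)
  case Nil
  with assms have "nat c = Suc (nat (c - 1))" by simp
  with Nil show ?thesis by simp
next
  case (Cons q r)
  with assms have "nat (c - q) = Suc (nat (c - 1 - q))" by auto
  with Cons show ?thesis by simp
qed

lemma string_of_heights_of_ones:
  "positive_walk a c w \<Longrightarrow> string_of_heights a c (heights_of_ones a c w) = w"
proof (induction w arbitrary: c)
  case (Cons x w)
  show ?case
  proof (cases "x = 1")
    case False
    with Cons.prems have "x = 0" and walk: "positive_walk a (c - 1) w" by auto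
    moreover have "0 \<le> c - 1"
      using positive_walk_nonneg[OF walk] .
    ultimately show ?thesis
      using Cons.IH[OF walk] string_of_heights_step_down heights_of_ones_admissible[OF walk]
      by auto
  qed (use Cons in auto)
qed auto

definition height_after :: "nat \<Rightarrow> nat list \<Rightarrow> nat \<Rightarrow> int" where
  "height_after a xs s = (\<Sum>i<s. int a * int (xs ! i) - 1)"

lemma height_after_0 [simp]: "height_after a xs 0 = 0"
  by (simp add: height_after_def)

lemma height_after_Cons_Suc [simp]:
  "height_after a (x # xs) (Suc s) = int a * int x - 1 + height_after a xs s"
  unfolding height_after_def by (simp only: sum.lessThan_Suc_shift) simp

lemma height_after_length:
  "set xs \<subseteq> {0, 1} \<Longrightarrow> height_after a xs (length xs) = int a * int (count_list xs 1) - int (length xs)"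
  by (induction xs) (auto simp: algebra_simps)

lemma positive_walk_iff:
  "positive_walk a c xs \<longleftrightarrow>
     set xs \<subseteq> {0, 1} \<and> (\<forall>s \<le> length xs. 0 \<le> c + height_after a xs s) \<and>
     c + height_after a xs (length xs) = 0"
proof (induction xs arbitrary: c)
  case (Cons x xs)
  have all_le_Suc: "(\<forall>s \<le> Suc n. P s) \<longleftrightarrow> P 0 \<and> (\<forall>s \<le> n. P (Suc s))" for n and P :: "nat \<Rightarrow> bool"
    by (metis Suc_le_mono le0 not0_implies_Suc)
  show ?case
    unfolding positive_walk.simps Cons.IH length_Cons all_le_Suc height_after_Cons_Suc height_after_0
    by (auto simp: algebra_simps)
qed auto

lemma positive_string_iff_positive_walk:
  "positive_string a m xs \<longleftrightarrow> positive_walk a 0 xs \<and> count_list xs 1 = m"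
proof -
  have partial_sum: "(\<Sum>u = 1..s. int a * int (xs ! (u - 1)) - 1) = height_after a xs s" for s
    unfolding height_after_def by (simp add: sum.atLeast1_atMost_eq)
  have "(\<forall>s \<in> {1..length xs}. 0 \<le> height_after a xs s) \<longleftrightarrow> (\<forall>s \<le> length xs. 0 \<le> height_after a xs s)"
  proof (intro iffI allI impI)
    fix s assume "\<forall>s \<in> {1..length xs}. 0 \<le> height_after a xs s" "s \<le> length xs"
    then show "0 \<le> height_after a xs s"
      by (cases s) auto
  qed auto
  moreover have "length xs = a * m \<longleftrightarrow> height_after a xs (length xs) = 0"
    if "set xs \<subseteq> {0, 1}" "count_list xs 1 = m"
    using height_after_length[OF that(1)] that(2) by (auto simp flip: of_nat_mult)
  ultimately show ?thesis
    unfolding positive_string_def nm_string_def positive_walk_iff partial_sum by auto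
qed

section \<open>Dropping pieces\<close>

lemma concurrent_iff: "concurrent a s t \<longleftrightarrow> \<bar>s - t\<bar> < int a"
proof
  assume "concurrent a s t"
  then obtain x where "real_of_int s < x" "x < real_of_int s + real a"
    "real_of_int t < x" "x < real_of_int t + real a"
    unfolding concurrent_def piece_def by auto
  then have "real_of_int (s - t) < real_of_int (int a)" "real_of_int (t - s) < real_of_int (int a)"
    by auto
  then have "s - t < int a" "t - s < int a"
    by (simp_all only: of_int_less_iff)
  then show "\<bar>s - t\<bar> < int a"
    by auto
next
  assume "\<bar>s - t\<bar> < int a"
  then have "s - t \<le> int a - 1" "t - s \<le> int a - 1"
    by auto
  then have "real_of_int (s - t) \<le> real_of_int (int a - 1)" "real_of_int (t - s) \<le> real_of_int (int a - 1)"
    by (simp_all only: of_int_le_iff)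
  then have "real_of_int (max s t) + 1/2 \<in> piece a s \<inter> piece a t"
    unfolding piece_def by (auto simp: max_def)
  then show "concurrent a s t"
    unfolding concurrent_def by auto
qed

lemma concurrent_commute: "concurrent a s t \<longleftrightarrow> concurrent a t s"
  by (simp add: concurrent_iff abs_minus_commute)

lemma concurrent_refl: "0 < a \<Longrightarrow> concurrent a s s"
  by (simp add: concurrent_iff)

lemma finite_concurrent_levels:
  "finite H \<Longrightarrow> finite {h. \<exists>t. (t, h) \<in> H \<and> concurrent a s t}"
  by (rule finite_subset[of _ "snd ` H"]) force+

lemma drop_level_greater:
  assumes "finite H" "(t, h) \<in> H" "concurrent a s t"
  shows "h < drop_level a H s"
proof -
  have "h \<le> Max {h. \<exists>t. (t, h) \<in> H \<and> concurrent a s t}"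
    using assms by (intro Max_ge[OF finite_concurrent_levels]) auto
  moreover have "\<exists>(t, h) \<in> H. concurrent a s t"
    using assms by auto
  ultimately show ?thesis
    unfolding drop_level_def by auto
qed

lemma drop_level_Suc_supported:
  assumes "finite H" "drop_level a H s = Suc k"
  shows "\<exists>t. (t, k) \<in> H \<and> concurrent a s t"
proof -
  have "\<exists>(t, h) \<in> H. concurrent a s t" and k: "k = Max {h. \<exists>t. (t, h) \<in> H \<and> concurrent a s t}"
    using assms(2) unfolding drop_level_def by (auto split: if_splits)
  then have "{h. \<exists>t. (t, h) \<in> H \<and> concurrent a s t} \<noteq> {}"
    by auto
  from Max_in[OF finite_concurrent_levels[OF assms(1)] this] show ?thesis
    unfolding k[symmetric] by auto
qed

lemma drop_level_cong:
  assumes "{p \<in> H. concurrent a s (fst p)} = {p \<in> H'. concurrent a s (fst p)}"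
  shows "drop_level a H s = drop_level a H' s"
proof -
  have "(t, h) \<in> H \<and> concurrent a s t \<longleftrightarrow> (t, h) \<in> H' \<and> concurrent a s t" for t h
    using assms by (metis (mono_tags, lifting) fst_conv mem_Collect_eq)
  then show ?thesis
    unfolding drop_level_def by (simp add: Bex_def)
qed

definition heap_of :: "nat \<Rightarrow> int list \<Rightarrow> (int \<times> nat) set" where
  "heap_of a w = foldl (\<lambda>H s. insert (s, drop_level a H s) H) {} w"

lemma heap_of_Nil [simp]: "heap_of a [] = {}"
  by (simp add: heap_of_def)

lemma heap_of_snoc: "heap_of a (w @ [s]) = insert (s, drop_level a (heap_of a w) s) (heap_of a w)"
  by (simp add: heap_of_def)

lemma heap_of_zero: "heap_of a [0] = {(0, 0)}"
  using heap_of_snoc[of a "[]" 0] by (simp add: drop_level_def)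

lemma finite_heap_of [simp]: "finite (heap_of a w)"
  by (induction w rule: rev_induct) (auto simp: heap_of_snoc)

lemma heaps_eq_range_heap_of: "heaps a = range (heap_of a)"
proof (intro set_eqI iffI)
  fix H assume "H \<in> heaps a"
  then show "H \<in> range (heap_of a)"
  proof induction
    case empty
    show ?case
      using heap_of_Nil by (metis rangeI)
  next
    case (drop H s)
    then obtain w where "H = heap_of a w" by auto
    then show ?case
      using heap_of_snoc[of a w s] by (metis rangeI)
  qed
next
  fix H assume "H \<in> range (heap_of a)"
  then obtain w where "H = heap_of a w" by auto
  moreover have "heap_of a w \<in> heaps a"
    by (induction w rule: rev_induct) (auto simp: heap_of_snoc intro: heaps.intros)
  ultimately show "H \<in> heaps a" by simp
qed

lemma dropped_piece_new: "0 < a \<Longrightarrow> (s, drop_level a (heap_of a w) s) \<notin> heap_of a w"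
  using drop_level_greater[OF finite_heap_of _ concurrent_refl] by blast

lemma card_heap_of: "0 < a \<Longrightarrow> card (heap_of a w) = length w"
  by (induction w rule: rev_induct) (auto simp: heap_of_snoc dropped_piece_new)

lemma fst_heap_of: "p \<in> heap_of a w \<Longrightarrow> fst p \<in> set w"
  by (induction w rule: rev_induct) (auto simp: heap_of_snoc)

lemma heap_of_supported:
  "(t, Suc h) \<in> heap_of a w \<Longrightarrow> \<exists>t'. (t', h) \<in> heap_of a w \<and> concurrent a t t'"
proof (induction w rule: rev_induct)
  case (snoc s w)
  have "heap_of a w \<subseteq> heap_of a (w @ [s])"
    by (auto simp: heap_of_snoc)
  moreover have "\<exists>t'. (t', h) \<in> heap_of a w \<and> concurrent a t t'"
  proof (cases "(t, Suc h) \<in> heap_of a w")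
    case False
    with snoc.prems have "t = s" "drop_level a (heap_of a w) s = Suc h"
      by (auto simp: heap_of_snoc)
    with drop_level_Suc_supported[OF finite_heap_of this(2)] show ?thesis
      by blast
  qed (rule snoc.IH)
  ultimately show ?case
    by blast
qed simp

lemma heap_of_level_unique:
  "(t, h) \<in> heap_of a w \<Longrightarrow> (t', h) \<in> heap_of a w \<Longrightarrow> concurrent a t t' \<Longrightarrow> t = t'"
proof (induction w rule: rev_induct)
  case (snoc s w)
  let ?h = "drop_level a (heap_of a w) s"
  have "(u, ?h) \<notin> heap_of a w" if "concurrent a s u \<or> concurrent a u s" for u
    using that drop_level_greater[OF finite_heap_of] concurrent_commute by blast
  moreover from snoc.prems(1,2) have
    "(t = s \<and> h = ?h) \<or> (t, h) \<in> heap_of a w" "(t' = s \<and> h = ?h) \<or> (t', h) \<in> heap_of a w"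
    by (auto simp: heap_of_snoc)
  ultimately show ?case
    using snoc.IH snoc.prems(3) by blast
qed simp

section \<open>Maximal pieces and the last dropped piece\<close>

definition maximal_piece :: "nat \<Rightarrow> (int \<times> nat) set \<Rightarrow> int \<times> nat \<Rightarrow> bool" where
  "maximal_piece a H x \<longleftrightarrow> x \<in> H \<and> (\<forall>y \<in> H. concurrent a (fst x) (fst y) \<longrightarrow> snd y \<le> snd x)"

lemma maximal_piece_subset:
  "maximal_piece a H' x \<Longrightarrow> x \<in> H \<Longrightarrow> H \<subseteq> H' \<Longrightarrow> maximal_piece a H x"
  unfolding maximal_piece_def by auto

lemma maximal_piece_last_dropped:
  "maximal_piece a (heap_of a (w @ [s])) (s, drop_level a (heap_of a w) s)"
  unfolding maximal_piece_def heap_of_snoc using drop_level_greater[OF finite_heap_of] by fastforce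

lemma maximal_piece_not_concurrent_last_dropped:
  assumes "maximal_piece a (heap_of a (w @ [s])) y" "y \<noteq> (s, drop_level a (heap_of a w) s)"
  shows "\<not> concurrent a s (fst y)"
proof
  assume concurrent: "concurrent a s (fst y)"
  from assms have "y \<in> heap_of a w"
    unfolding maximal_piece_def heap_of_snoc by auto
  then have "snd y < drop_level a (heap_of a w) s"
    using drop_level_greater[OF finite_heap_of _ concurrent] by (cases y) auto
  moreover have "drop_level a (heap_of a w) s \<le> snd y"
    using assms(1) concurrent concurrent_commute unfolding maximal_piece_def heap_of_snoc by auto
  ultimately show False
    by simp
qed

lemma maximal_piece_right_of_last_dropped:
  assumes "0 < a" "admissible a c (w @ [s])" "maximal_piece a (heap_of a (w @ [s])) y"
    "y \<noteq> (s, drop_level a (heap_of a w) s)"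
  shows "s < fst y"
  using assms(2-)
proof (induction w arbitrary: s y rule: rev_induct)
  case Nil
  then show ?case
    unfolding maximal_piece_def heap_of_snoc by simp
next
  case (snoc r w)
  from snoc.prems(1) have admissible: "admissible a c (w @ [r])" and "s \<le> r + int a - 1"
    unfolding admissible_snoc by auto
  have heap: "heap_of a ((w @ [r]) @ [s]) = insert (s, drop_level a (heap_of a (w @ [r])) s) (heap_of a (w @ [r]))"
    by (rule heap_of_snoc)
  with snoc.prems(2,3) have "y \<in> heap_of a (w @ [r])"
    unfolding maximal_piece_def by auto
  with snoc.prems(2) heap have maximal: "maximal_piece a (heap_of a (w @ [r])) y"
    using maximal_piece_subset by blast
  have "r \<le> fst y"
    using snoc.IH[OF admissible maximal] by (cases "y = (r, drop_level a (heap_of a w) r)") auto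
  with \<open>s \<le> r + int a - 1\<close> maximal_piece_not_concurrent_last_dropped[OF snoc.prems(2,3)] \<open>0 < a\<close>
  show ?case
    unfolding concurrent_iff by auto
qed

lemma heap_of_butlast:
  "0 < a \<Longrightarrow> heap_of a w = heap_of a (w @ [s]) - {(s, drop_level a (heap_of a w) s)}"
  using heap_of_snoc[of a w s] dropped_piece_new[of a s w] by auto

lemma heap_of_inject:
  assumes "0 < a" "admissible a c w" "admissible a c w'" "heap_of a w = heap_of a w'"
  shows "w = w'"
  using assms(2-)
proof (induction w arbitrary: w' rule: rev_induct)
  case Nil
  then show ?case
    using card_heap_of[OF \<open>0 < a\<close>, of w'] by simp
next
  case (snoc s u)
  have "w' \<noteq> []"
    using snoc.prems(3) card_heap_of[OF \<open>0 < a\<close>] by (metis length_0_conv snoc_eq_iff_butlast)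
  then obtain u' s' where w': "w' = u' @ [s']"
    by (metis rev_exhaust)
  let ?x = "(s, drop_level a (heap_of a u) s)" and ?x' = "(s', drop_level a (heap_of a u') s')"
  have "?x = ?x'"
  proof (rule ccontr)
    assume "?x \<noteq> ?x'"
    moreover have "maximal_piece a (heap_of a (u @ [s])) ?x'" "maximal_piece a (heap_of a (u' @ [s'])) ?x"
      using maximal_piece_last_dropped snoc.prems(3) w' by metis+
    ultimately have "s < s'" "s' < s"
      using maximal_piece_right_of_last_dropped[OF \<open>0 < a\<close>] snoc.prems(1,2) w' by fastforce+
    then show False
      by simp
  qed
  then have "s = s'" and "heap_of a u = heap_of a u'"
    using heap_of_butlast[OF \<open>0 < a\<close>] snoc.prems(3) w' by (metis prod.inject)+
  moreover have "admissible a c u" "admissible a c u'"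
    using snoc.prems(1,2) w' admissible_snoc by blast+
  ultimately show ?case
    using snoc.IH w' by blast
qed

lemma drop_level_remove_maximal:
  assumes "maximal_piece a (heap_of a v) x"
  shows "drop_level a (heap_of a v - {x}) (fst x) = snd x"
proof (rule antisym)
  obtain t h where x: "x = (t, h)"
    by fastforce
  show "snd x \<le> drop_level a (heap_of a v - {x}) (fst x)"
  proof (cases h)
    case (Suc k)
    with assms x obtain t' where "(t', k) \<in> heap_of a v - {x}" "concurrent a t t'"
      using heap_of_supported unfolding maximal_piece_def by fastforce
    with x Suc show ?thesis
      using drop_level_greater[of "heap_of a v - {x}"] by fastforce
  qed (simp add: x)
  show "drop_level a (heap_of a v - {x}) (fst x) \<le> snd x"
  proof (cases "drop_level a (heap_of a v - {x}) t")
    case (Suc k)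
    moreover have "finite (heap_of a v - {x})"
      by simp
    ultimately obtain t' where t': "(t', k) \<in> heap_of a v - {x}" "concurrent a t t'"
      using drop_level_Suc_supported[of "heap_of a v - {x}" a t k] by blast
    with assms x have "k \<le> h"
      unfolding maximal_piece_def by fastforce
    moreover have "k \<noteq> h"
      using heap_of_level_unique[of t h a v t'] t' assms x unfolding maximal_piece_def by auto
    ultimately show ?thesis
      using Suc x by simp
  qed (simp add: x)
qed

lemma heap_of_remove_maximal:
  "0 < a \<Longrightarrow> maximal_piece a (heap_of a v) x \<Longrightarrow> \<exists>v'. heap_of a v' = heap_of a v - {x}"
proof (induction v rule: rev_induct)
  case Nil
  then show ?case
    by (simp add: maximal_piece_def)
next
  case (snoc t v)
  let ?y = "(t, drop_level a (heap_of a v) t)"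
  show ?case
  proof (cases "x = ?y")
    case True
    then show ?thesis
      using heap_of_butlast[OF snoc.prems(1)] by blast
  next
    case False
    then have "x \<in> heap_of a v"
      using snoc.prems(2) unfolding maximal_piece_def heap_of_snoc by auto
    then have "maximal_piece a (heap_of a v) x"
      using maximal_piece_subset[OF snoc.prems(2)] by (auto simp: heap_of_snoc)
    then obtain v' where v': "heap_of a v' = heap_of a v - {x}"
      using snoc.IH snoc.prems(1) by blast
    have "\<not> concurrent a t (fst x)"
      using maximal_piece_not_concurrent_last_dropped[OF snoc.prems(2) False] .
    then have "{p \<in> heap_of a v'. concurrent a t (fst p)} = {p \<in> heap_of a v. concurrent a t (fst p)}"
      using v' by auto
    then have "drop_level a (heap_of a v') t = drop_level a (heap_of a v) t"
      by (rule drop_level_cong)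
    then have "heap_of a (v' @ [t]) = heap_of a (v @ [t]) - {x}"
      using v' False by (auto simp: heap_of_snoc)
    then show ?thesis
      by blast
  qed
qed

section \<open>Right 0-pyramids are the heaps of admissible sequences\<close>

lemma admissible_heap_of_covers:
  assumes "admissible a 0 w" "w \<noteq> []" "0 \<le> t" "t \<le> last w + int a - 1"
  shows "\<exists>p \<in> heap_of a w. concurrent a t (fst p)"
  using assms
proof (induction w arbitrary: t rule: rev_induct)
  case (snoc s w)
  have "s \<in> fst ` heap_of a (w @ [s])"
    by (force simp: heap_of_snoc)
  moreover have "heap_of a w \<subseteq> heap_of a (w @ [s])"
    by (auto simp: heap_of_snoc)
  moreover have "concurrent a t s \<or> (\<exists>p \<in> heap_of a w. concurrent a t (fst p))"
  proof (cases "s - int a < t")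
    case True
    with snoc.prems(4) have "\<bar>t - s\<bar> < int a"
      by simp
    then show ?thesis
      by (simp add: concurrent_iff)
  next
    case False
    with snoc.prems show ?thesis
      using snoc.IH by (cases "w = []") (auto simp: admissible_snoc)
  qed
  ultimately show ?case
    by blast
qed simp

lemma admissible_heap_of_ground:
  assumes "admissible a 0 w" "w \<noteq> []"
  shows "{p \<in> heap_of a w. snd p = 0} = {(0, 0)}"
  using assms
proof (induction w rule: rev_induct)
  case (snoc s w)
  show ?case
  proof (cases "w = []")
    case True
    with snoc.prems have "s = 0"
      by simp
    with True show ?thesis
      using heap_of_zero by auto
  next
    case False
    with snoc.prems have "admissible a 0 w" "0 \<le> s" "s \<le> last w + int a - 1"
      by (auto simp: admissible_snoc)
    then obtain t h where "(t, h) \<in> heap_of a w" "concurrent a s t"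
      using admissible_heap_of_covers False by fastforce
    then have "drop_level a (heap_of a w) s \<noteq> 0"
      using drop_level_greater[OF finite_heap_of] by fastforce
    then have "{p \<in> heap_of a (w @ [s]). snd p = 0} = {p \<in> heap_of a w. snd p = 0}"
      by (auto simp: heap_of_snoc)
    with snoc.IH \<open>admissible a 0 w\<close> False show ?thesis
      by simp
  qed
qed simp

lemma right0_pyramid_heap_of:
  assumes "admissible a 0 w" "w \<noteq> []"
  shows "right0_pyramid a (heap_of a w)"
proof -
  have "\<forall>(t, h) \<in> heap_of a w. 0 \<le> t"
    using fst_heap_of admissible_nonneg[OF assms(1)] by fastforce
  moreover have "{p \<in> heap_of a w. snd p = 0} = {(0, 0)}"
    by (rule admissible_heap_of_ground[OF assms])
  moreover have "heap_of a w \<in> heaps a"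
    unfolding heaps_eq_range_heap_of by simp
  ultimately show ?thesis
    unfolding right0_pyramid_def pyramid_def by auto
qed

lemma right0_pyramid_ground:
  assumes "right0_pyramid a H"
  shows "{p \<in> H. snd p = 0} = {(0, 0)}"
proof -
  from assms obtain z where "{p \<in> H. snd p = 0} = {z}"
    unfolding right0_pyramid_def pyramid_def by (metis card_1_singletonE)
  moreover have "(0, 0) \<in> {p \<in> H. snd p = 0}"
    using assms unfolding right0_pyramid_def by simp
  ultimately show ?thesis
    by simp
qed

lemma right0_pyramid_obtain_heap_of:
  assumes "right0_pyramid a H"
  obtains v where "H = heap_of a v"
  using assms unfolding right0_pyramid_def pyramid_def heaps_eq_range_heap_of by blast

lemma heap_of_level_one: "(t, Suc k) \<in> heap_of a v \<Longrightarrow> \<exists>t'. (t', Suc 0) \<in> heap_of a v"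
proof (induction k arbitrary: t)
  case (Suc k)
  then show ?case
    using heap_of_supported by blast
qed blast

lemma right0_pyramid_base_not_maximal:
  assumes "right0_pyramid a H" "2 \<le> card H"
  shows "\<not> maximal_piece a H (0, 0)"
proof -
  obtain v where H: "H = heap_of a v"
    using assms(1) by (rule right0_pyramid_obtain_heap_of)
  have ground: "{p \<in> H. snd p = 0} = {(0, 0)}"
    by (rule right0_pyramid_ground[OF assms(1)])
  have "\<not> H \<subseteq> {(0, 0)}"
  proof
    assume "H \<subseteq> {(0, 0)}"
    then have "card H \<le> 1"
      using card_mono[of "{(0::int, 0::nat)}" H] by simp
    with assms(2) show False
      by simp
  qed
  then obtain y where "y \<in> H" "y \<noteq> (0, 0)"
    by blast
  with ground have "snd y \<noteq> 0"
    by (metis (mono_tags, lifting) mem_Collect_eq singletonD)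
  with \<open>y \<in> H\<close> obtain t k where "(t, Suc k) \<in> H"
    by (metis not0_implies_Suc prod.collapse)
  then obtain t1 where t1: "(t1, Suc 0) \<in> H"
    using heap_of_level_one unfolding H by blast
  then obtain t0 where t0: "(t0, 0) \<in> H" "concurrent a t1 t0"
    using heap_of_supported[of t1 0 a v] unfolding H by blast
  from t0(1) have "(t0, 0) \<in> {p \<in> H. snd p = 0}"
    by simp
  then have "t0 = 0"
    unfolding ground by simp
  with t0(2) have "concurrent a 0 t1"
    using concurrent_commute by simp
  with t1 show ?thesis
    unfolding maximal_piece_def by fastforce
qed

lemma leftmost_maximal_piece_exists:
  assumes "finite H" "H \<noteq> {}"
  obtains x where "maximal_piece a H x" "\<And>z. maximal_piece a H z \<Longrightarrow> fst x \<le> fst z"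
proof -
  define M where "M = {z. maximal_piece a H z}"
  have "finite M"
    using assms(1) unfolding M_def maximal_piece_def by (auto intro: finite_subset)
  have "Max (snd ` H) \<in> snd ` H"
    using assms by (intro Max_in) auto
  then obtain top where "top \<in> H" "snd top = Max (snd ` H)"
    by auto
  then have "top \<in> M"
    unfolding M_def maximal_piece_def using assms(1) by auto
  then have "Min (fst ` M) \<in> fst ` M"
    using \<open>finite M\<close> by (intro Min_in) auto
  then obtain x where "x \<in> M" "fst x = Min (fst ` M)"
    by auto
  with \<open>finite M\<close> show ?thesis
    using that unfolding M_def by auto
qed

lemma right0_pyramid_remove_maximal:
  assumes "0 < a" "right0_pyramid a H" "maximal_piece a H x" "x \<noteq> (0, 0)"
  shows "right0_pyramid a (H - {x})"
proof -
  obtain v where "H = heap_of a v"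
    using assms(2) by (rule right0_pyramid_obtain_heap_of)
  then obtain v' where "heap_of a v' = H - {x}"
    using heap_of_remove_maximal[OF assms(1)] assms(3) by blast
  then have "H - {x} \<in> heaps a"
    unfolding heaps_eq_range_heap_of by (metis rangeI)
  moreover have "{p \<in> H - {x}. snd p = 0} = {(0, 0)}"
    using right0_pyramid_ground[OF assms(2)] assms(4) by auto
  ultimately show ?thesis
    using assms(2) unfolding right0_pyramid_def pyramid_def by auto
qed

lemma leftmost_maximal_piece_bound:
  assumes "0 < a" "maximal_piece a H x" "\<And>z. maximal_piece a H z \<Longrightarrow> fst x \<le> fst z"
    "heap_of a w = H - {x}" "w \<noteq> []"
  shows "fst x \<le> last w + int a - 1"
proof -
  let ?y = "(last w, drop_level a (heap_of a (butlast w)) (last w))"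
  have last: "maximal_piece a (H - {x}) ?y"
    using maximal_piece_last_dropped[of a "butlast w" "last w"] assms(4,5) by simp
  show ?thesis
  proof (cases "maximal_piece a H ?y")
    case True
    with assms(1,3) show ?thesis
      by fastforce
  next
    case False
    with last obtain z where "z \<in> H" "concurrent a (last w) (fst z)" "snd ?y < snd z"
      unfolding maximal_piece_def by auto
    moreover from last have "z \<notin> H - {x}" if "snd ?y < snd z" "concurrent a (last w) (fst z)"
      using that unfolding maximal_piece_def by auto
    ultimately have "concurrent a (last w) (fst x)"
      by auto
    then show ?thesis
      unfolding concurrent_iff by auto
  qed
qed

lemma right0_pyramid_eq_heap_of:
  assumes "0 < a"
  shows "right0_pyramid a H \<Longrightarrow> card H = Suc n \<Longrightarrow> \<exists>w. admissible a 0 w \<and> heap_of a w = H"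
proof (induction n arbitrary: H)
  case 0
  then obtain z where "H = {z}"
    by (metis One_nat_def card_1_singletonE)
  moreover have "(0, 0) \<in> H"
    using "0.prems"(1) unfolding right0_pyramid_def by simp
  ultimately have "H = {(0, 0)}"
    by simp
  then show ?case
    using heap_of_zero by (intro exI[of _ "[0]"]) auto
next
  case (Suc n H)
  obtain v where H: "H = heap_of a v"
    using Suc.prems(1) by (rule right0_pyramid_obtain_heap_of)
  have "finite H" "H \<noteq> {}"
    using Suc.prems(2) H by auto
  then obtain x where maximal: "maximal_piece a H x"
    and leftmost: "\<And>z. maximal_piece a H z \<Longrightarrow> fst x \<le> fst z"
    by (rule leftmost_maximal_piece_exists[where a = a]) blast
  have "x \<in> H"
    using maximal unfolding maximal_piece_def by simp
  have "x \<noteq> (0, 0)"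
    using maximal right0_pyramid_base_not_maximal[OF Suc.prems(1)] Suc.prems(2) by auto
  have card: "card (H - {x}) = Suc n"
    using Suc.prems(2) \<open>x \<in> H\<close> \<open>finite H\<close> by simp
  then obtain w where w: "admissible a 0 w" "heap_of a w = H - {x}"
    using Suc.IH right0_pyramid_remove_maximal[OF assms Suc.prems(1) maximal \<open>x \<noteq> (0, 0)\<close>] by blast
  have "w \<noteq> []"
    using w(2) card by (metis card.empty heap_of_Nil Zero_not_Suc)
  have "drop_level a (H - {x}) (fst x) = snd x"
    using drop_level_remove_maximal maximal unfolding H by blast
  then have "heap_of a (w @ [fst x]) = H"
    using w(2) \<open>x \<in> H\<close> by (auto simp: heap_of_snoc)
  moreover have "0 \<le> fst x"
    using Suc.prems(1) \<open>x \<in> H\<close> unfolding right0_pyramid_def by auto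
  then have "admissible a 0 (w @ [fst x])"
    using w(1) \<open>w \<noteq> []\<close> leftmost_maximal_piece_bound[OF assms maximal leftmost w(2)]
    by (simp add: admissible_snoc)
  ultimately show ?case
    by blast
qed

lemma bij_betw_heap_of:
  assumes "0 < a" "1 \<le> m"
  shows "bij_betw (heap_of a) {w. admissible a 0 w \<and> length w = m} {H. right0_pyramid a H \<and> card H = m}"
proof (rule bij_betw_imageI)
  show "inj_on (heap_of a) {w. admissible a 0 w \<and> length w = m}"
    using heap_of_inject[OF assms(1)] by (auto intro: inj_onI)
  show "heap_of a ` {w. admissible a 0 w \<and> length w = m} = {H. right0_pyramid a H \<and> card H = m}"
  proof (intro subset_antisym subsetI)
    fix H assume "H \<in> heap_of a ` {w. admissible a 0 w \<and> length w = m}"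
    then obtain w where "admissible a 0 w" "length w = m" "H = heap_of a w"
      by auto
    with assms show "H \<in> {H. right0_pyramid a H \<and> card H = m}"
      using right0_pyramid_heap_of card_heap_of by fastforce
  next
    fix H assume "H \<in> {H. right0_pyramid a H \<and> card H = m}"
    then have "right0_pyramid a H" "card H = Suc (m - 1)"
      using assms(2) by auto
    then obtain w where "admissible a 0 w" "heap_of a w = H"
      using right0_pyramid_eq_heap_of[OF assms(1)] by blast
    moreover from this have "length w = m"
      using card_heap_of[OF assms(1), of w] \<open>card H = Suc (m - 1)\<close> assms(2) by simp
    ultimately show "H \<in> heap_of a ` {w. admissible a 0 w \<and> length w = m}"
      by blast
  qed
qed

lemma bij_betw_heights_of_ones:
  assumes "0 < a"
  shows "bij_betw (heights_of_ones a 0) {xs. positive_string a m xs} {w. admissible a 0 w \<and> length w = m}"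
proof (rule bij_betw_byWitness[where f' = "string_of_heights a 0"])
  show "\<forall>xs \<in> {xs. positive_string a m xs}. string_of_heights a 0 (heights_of_ones a 0 xs) = xs"
    by (simp add: positive_string_iff_positive_walk string_of_heights_of_ones)
  show "\<forall>w \<in> {w. admissible a 0 w \<and> length w = m}. heights_of_ones a 0 (string_of_heights a 0 w) = w"
    using string_of_heights_correct[OF _ _ assms] by simp
  show "heights_of_ones a 0 ` {xs. positive_string a m xs} \<subseteq> {w. admissible a 0 w \<and> length w = m}"
    using heights_of_ones_admissible by (auto simp: positive_string_iff_positive_walk)
  show "string_of_heights a 0 ` {w. admissible a 0 w \<and> length w = m} \<subseteq> {xs. positive_string a m xs}"
    using string_of_heights_correct[OF _ _ assms] by (auto simp: positive_string_iff_positive_walk)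
qed

theorem lemma5:
  fixes a m :: nat
  assumes "a \<ge> 3" and "m \<ge> 1"
  shows "\<exists>f. bij_betw f {H. right0_pyramid a H \<and> card H = m} {xs. positive_string a m xs}"
proof -
  have "0 < a"
    using assms(1) by simp
  then have "bij_betw (heap_of a \<circ> heights_of_ones a 0)
      {xs. positive_string a m xs} {H. right0_pyramid a H \<and> card H = m}"
    using bij_betw_trans bij_betw_heights_of_ones bij_betw_heap_of assms(2) by blast
  then show ?thesis
    using bij_betw_inv_into by blast
qed

end
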